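(* Let $(R,\mathfrak m,k)$ be a Noetherian local ring of prime characteristic $p$ satisfying $$(0:\mathfrak m^p)_R:=\{x\in R \mid \mathfrak m^p x=0\}\not\subseteq \mathfrak m^p .$$ If $M$ is a finitely generated $R$-module such that $\operatorname{Tor}^R_j(M,{}^{\phi^r}\!R)=0$ for some integers $j\ge 1$ and $r\ge 1$, then $M$ is a projective (equivalently, free) $R$-module.
   Context: $\phi:R\to R$ denotes the Frobenius homomorphism $\phi(a)=a^p$. For $r\ge 1$, ${}^{\phi^r}\!R$ denotes the ring $R$ regarded as an $R$-module via $\phi^r$, i.e. $a\cdot b=a^{p^r}b$ for $a\in R$, $b\in {}^{\phi^r}\!R$. *)

theory Defs
  imports Complex_Main "HOL-Computational_Algebra.Primes"
begin

definition is_ideal :: "'a::comm_ring_1 set \<Rightarrow> bool" where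
  "is_ideal I \<longleftrightarrow> 0 \<in> I \<and> (\<forall>x\<in>I. \<forall>y\<in>I. x + y \<in> I) \<and> (\<forall>a x. x \<in> I \<longrightarrow> a * x \<in> I)"

definition ideal_gen :: "'a::comm_ring_1 set \<Rightarrow> 'a set" where
  "ideal_gen S = \<Inter>{I. is_ideal I \<and> S \<subseteq> I}"

definition noetherian_ring :: "'a::comm_ring_1 itself \<Rightarrow> bool" where
  "noetherian_ring _ \<longleftrightarrow> (\<forall>I::'a set. is_ideal I \<longrightarrow> (\<exists>S. finite S \<and> I = ideal_gen S))"

definition maximal_ideal :: "'a::comm_ring_1 set \<Rightarrow> bool" where
  "maximal_ideal m \<longleftrightarrow> is_ideal m \<and> m \<noteq> UNIV \<and>
     (\<forall>J. is_ideal J \<and> m \<subseteq> J \<longrightarrow> J = m \<or> J = UNIV)"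

definition local_ring :: "'a::comm_ring_1 itself \<Rightarrow> bool" where
  "local_ring _ \<longleftrightarrow> (\<exists>!m::'a set. maximal_ideal m)"

definition max_ideal :: "'a::comm_ring_1 itself \<Rightarrow> 'a set" where
  "max_ideal _ = (THE m. maximal_ideal m)"

definition ideal_pow :: "'a::comm_ring_1 set \<Rightarrow> nat \<Rightarrow> 'a set" where
  "ideal_pow I n = ideal_gen {(\<Prod>i<n. f i) | f. \<forall>i<n. f i \<in> I}"

definition annihilator :: "'a::comm_ring_1 set \<Rightarrow> 'a set" where
  "annihilator J = {x. \<forall>y\<in>J. y * x = 0}"

definition vecs :: "nat \<Rightarrow> (nat \<Rightarrow> 'a::zero) set" where
  "vecs n = {v. \<forall>k\<ge>n. v k = 0}"

definition mat_app :: "nat \<Rightarrow> nat \<Rightarrow> (nat \<Rightarrow> nat \<Rightarrow> 'a::comm_ring_1) \<Rightarrow> (nat \<Rightarrow> 'a) \<Rightarrow> (nat \<Rightarrow> 'a)" where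
  "mat_app m n A v = (\<lambda>k. if k < m then (\<Sum>l<n. A k l * v l) else 0)"

definition frob_mat :: "nat \<Rightarrow> (nat \<Rightarrow> nat \<Rightarrow> 'a::comm_ring_1) \<Rightarrow> (nat \<Rightarrow> nat \<Rightarrow> 'a)" where
  "frob_mat r A = (\<lambda>k l. (A k l) ^ (CHAR('a) ^ r))"

text \<open>A resolution  ... \<rightarrow> R^(b 2) \<rightarrow>(d 1) R^(b 1) \<rightarrow>(d 0) R^(b 0) \<rightarrow>(eps) M \<rightarrow> 0 by finite
  free modules; d i is the matrix of the map F_(i+1) \<rightarrow> F_i.  The module M is the whole
  type 'm with scalar multiplication scale.\<close>
definition free_resolution ::
  "('a::comm_ring_1 \<Rightarrow> 'm::ab_group_add \<Rightarrow> 'm) \<Rightarrow> (nat \<Rightarrow> nat) \<Rightarrow> (nat \<Rightarrow> nat \<Rightarrow> nat \<Rightarrow> 'a)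
     \<Rightarrow> ((nat \<Rightarrow> 'a) \<Rightarrow> 'm) \<Rightarrow> bool" where
  "free_resolution scale b d eps \<longleftrightarrow>
     (\<forall>v\<in>vecs (b 0). \<forall>w\<in>vecs (b 0). eps (\<lambda>k. v k + w k) = eps v + eps w) \<and>
     (\<forall>c. \<forall>v\<in>vecs (b 0). eps (\<lambda>k. c * v k) = scale c (eps v)) \<and>
     eps ` vecs (b 0) = UNIV \<and>
     {v \<in> vecs (b 0). eps v = 0} = mat_app (b 0) (b 1) (d 0) ` vecs (b 1) \<and>
     (\<forall>i. {v \<in> vecs (b (Suc i)). mat_app (b i) (b (Suc i)) (d i) v = (\<lambda>_. 0)}
            = mat_app (b (Suc i)) (b (Suc (Suc i))) (d (Suc i)) ` vecs (b (Suc (Suc i))))"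

text \<open>Tor_j^R(M, phi^r R) = 0 for j \<ge> 1, computed from a finite free resolution F of M:
  F_i \<otimes>_R phi^r R = R^(b i) and d \<otimes> 1 is the matrix with entries raised to p^r.\<close>
definition tor_frob_vanishes ::
  "('a::comm_ring_1 \<Rightarrow> 'm::ab_group_add \<Rightarrow> 'm) \<Rightarrow> nat \<Rightarrow> nat \<Rightarrow> bool" where
  "tor_frob_vanishes scale j r \<longleftrightarrow>
     (\<exists>b d eps. free_resolution scale b d eps \<and>
        {v \<in> vecs (b j). mat_app (b (j - 1)) (b j) (frob_mat r (d (j - 1))) v = (\<lambda>_. 0)}
          \<subseteq> mat_app (b j) (b (Suc j)) (frob_mat r (d j)) ` vecs (b (Suc j)))"

definition fin_gen_module :: "('a::comm_ring_1 \<Rightarrow> 'm::ab_group_add \<Rightarrow> 'm) \<Rightarrow> bool" where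
  "fin_gen_module scale \<longleftrightarrow> (\<exists>S. finite S \<and> Modules.module.span scale S = UNIV)"

definition free_module :: "('a::comm_ring_1 \<Rightarrow> 'm::ab_group_add \<Rightarrow> 'm) \<Rightarrow> bool" where
  "free_module scale \<longleftrightarrow> (\<exists>B. \<not> Modules.module.dependent scale B \<and> Modules.module.span scale B = UNIV)"

end

(*
  Write d_i for the matrices of the resolution F of M and call d_i m-pure if
  Im d_i \<inter> m F_i \<subseteq> m Im d_i. Gaussian elimination with unit pivots shows that the image of an
  m-pure matrix is a direct summand of F_i, complemented by a set I of coordinate vectors; for
  d_0 this makes M = coker d_0 free on the images of these coordinate vectors.

  Purity propagates down the resolution. If d_(i+1) is m-pure, then ker d_i is complemented by
  coordinates I, and for g supported on I with d_i g \<in> m F a nonzero socle element z gives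
  d_i (z g) = 0, hence z g = 0 and g \<in> m F.

  Purity of d_(j-1) comes from the Tor hypothesis. Take x \<in> (0 : m^p) - m^p; it is nonzero, so some
  multiple of it is a nonzero socle element. If d_(j-1) v \<in> m F, then x \<phi>^r(v) is a cycle of the
  Frobenius-twisted complex because \<phi>^r(m) \<subseteq> m^p, hence a boundary. Running the elimination
  modulo m on the columns of d_j, the part of v outside Im d_j + m F then satisfies
  x \<phi>^r(g) \<in> \<phi>^r(Im d_j) + m^p F, which forces g \<in> m F since x \<notin> m^p.
*)

theory Submission
  imports Defs "HOL-Library.Function_Algebras"
begin

section \<open>Ideals of a local ring\<close>

lemma ideal_zero: "is_ideal I \<Longrightarrow> 0 \<in> I"
  by (simp add: is_ideal_def)

lemma ideal_add: "is_ideal I \<Longrightarrow> a \<in> I \<Longrightarrow> b \<in> I \<Longrightarrow> a + b \<in> I"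
  by (simp add: is_ideal_def)

lemma ideal_mult_left: "is_ideal I \<Longrightarrow> a \<in> I \<Longrightarrow> c * a \<in> I"
  by (simp add: is_ideal_def)

lemma ideal_mult_right: "is_ideal I \<Longrightarrow> a \<in> I \<Longrightarrow> a * c \<in> I"
  by (metis ideal_mult_left mult.commute)

lemma ideal_uminus: "is_ideal I \<Longrightarrow> a \<in> I \<Longrightarrow> - a \<in> I"
  using ideal_mult_left[of I a "- 1"] by simp

lemma ideal_diff: "is_ideal I \<Longrightarrow> a \<in> I \<Longrightarrow> b \<in> I \<Longrightarrow> a - b \<in> I"
  by (metis diff_conv_add_uminus ideal_add ideal_uminus)

lemma ideal_eq_UNIV_iff: "is_ideal I \<Longrightarrow> I = UNIV \<longleftrightarrow> 1 \<in> I"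
  using ideal_mult_right[of I 1] by auto

lemma is_ideal_ideal_gen: "is_ideal (ideal_gen S)"
  unfolding is_ideal_def ideal_gen_def by auto

lemma ideal_gen_superset: "S \<subseteq> ideal_gen S"
  unfolding ideal_gen_def by auto

lemma is_ideal_principal: "is_ideal {c * a | c. True}"
  unfolding is_ideal_def
  by (auto intro: exI[of _ 0]) (metis distrib_right, metis mult.assoc)

lemma is_ideal_Union_chain:
  assumes "C \<noteq> {}" and "\<And>I. I \<in> C \<Longrightarrow> is_ideal I"
    and "\<And>I J. I \<in> C \<Longrightarrow> J \<in> C \<Longrightarrow> I \<subseteq> J \<or> J \<subseteq> I"
  shows "is_ideal (\<Union>C)"
  unfolding is_ideal_def
proof (intro conjI ballI allI impI)
  show "0 \<in> \<Union>C" using assms(1,2) ideal_zero by blast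
next
  fix a b assume "a \<in> \<Union>C" "b \<in> \<Union>C"
  then obtain I J where IJ: "I \<in> C" "J \<in> C" "a \<in> I" "b \<in> J" by blast
  then show "a + b \<in> \<Union>C"
    using assms(2)[OF IJ(1)] assms(2)[OF IJ(2)] assms(3)[OF IJ(1,2)] by (metis UnionI ideal_add subsetD)
next
  fix c a assume "a \<in> \<Union>C"
  then show "c * a \<in> \<Union>C" using assms(2) ideal_mult_left by blast
qed

lemma proper_ideal_in_maximal_ideal:
  fixes I :: "'a::comm_ring_1 set"
  assumes "is_ideal I" and "1 \<notin> I"
  shows "\<exists>M. maximal_ideal M \<and> I \<subseteq> M"
proof -
  define \<A> where "\<A> = {J. is_ideal J \<and> 1 \<notin> J \<and> I \<subseteq> J}"
  have "\<exists>M\<in>\<A>. \<forall>J\<in>\<A>. M \<subseteq> J \<longrightarrow> J = M"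
  proof (rule subset_Zorn_nonempty)
    show "\<A> \<noteq> {}" using assms \<A>_def by blast
  next
    fix C assume C: "C \<noteq> {}" "subset.chain \<A> C"
    then have "is_ideal (\<Union>C)"
      by (intro is_ideal_Union_chain) (auto simp: \<A>_def subset_chain_def)
    with C show "\<Union>C \<in> \<A>" by (auto simp: \<A>_def subset_chain_def)
  qed
  then obtain M where M: "M \<in> \<A>" and max: "\<And>J. J \<in> \<A> \<Longrightarrow> M \<subseteq> J \<Longrightarrow> J = M" by blast
  have "maximal_ideal M"
    unfolding maximal_ideal_def
    using M max ideal_eq_UNIV_iff by (auto simp: \<A>_def)
  with M show ?thesis by (auto simp: \<A>_def)
qed

lemma nonunit_in_maximal_ideal:
  fixes a :: "'a::comm_ring_1"
  assumes "\<nexists>u. u * a = 1"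
  shows "\<exists>M. maximal_ideal M \<and> a \<in> M"
proof -
  have "a \<in> {c * a | c. True}" by (metis (mono_tags) mem_Collect_eq mult_1)
  moreover have "1 \<notin> {c * a | c. True}" using assms by auto
  ultimately show ?thesis using proper_ideal_in_maximal_ideal[OF is_ideal_principal] by blast
qed

locale local_max_ideal =
  fixes m :: "'a::comm_ring_1 set"
  assumes is_ideal_m: "is_ideal m"
    and one_notin_m: "1 \<notin> m"
    and unit_outside_m: "a \<notin> m \<Longrightarrow> \<exists>u. u * a = 1"

lemma local_ring_local_max_ideal:
  assumes "local_ring TYPE('a::comm_ring_1)"
  shows "local_max_ideal (max_ideal TYPE('a))"
proof -
  have uniq: "\<exists>!m::'a set. maximal_ideal m" using assms unfolding local_ring_def .
  then have max: "maximal_ideal (max_ideal TYPE('a))" unfolding max_ideal_def by (rule theI')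
  show ?thesis
  proof
    show "is_ideal (max_ideal TYPE('a))" using max by (simp add: maximal_ideal_def)
    then show "1 \<notin> max_ideal TYPE('a)" using max ideal_eq_UNIV_iff by (auto simp: maximal_ideal_def)
    fix a :: 'a assume "a \<notin> max_ideal TYPE('a)"
    then show "\<exists>u. u * a = 1" using uniq max nonunit_in_maximal_ideal by blast
  qed
qed

lemma (in local_max_ideal) one_minus_unit:
  assumes "a \<in> m"
  shows "\<exists>u. u * (1 - a) = 1"
proof -
  have "1 - a \<notin> m"
    using assms ideal_add[OF is_ideal_m, of "1 - a" a] one_notin_m by auto
  then show ?thesis using unit_outside_m by blast
qed

lemma is_ideal_ideal_pow: "is_ideal (ideal_pow I n)"
  by (simp add: ideal_pow_def is_ideal_ideal_gen)

lemma prod_in_ideal_pow: "(\<And>i. i < n \<Longrightarrow> f i \<in> I) \<Longrightarrow> (\<Prod>i<n. f i) \<in> ideal_pow I n"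
  unfolding ideal_pow_def by (rule subsetD[OF ideal_gen_superset]) blast

lemma power_in_ideal_pow:
  assumes "a \<in> I" and "n \<le> k"
  shows "a ^ k \<in> ideal_pow I n"
proof -
  have "a ^ n \<in> ideal_pow I n" using prod_in_ideal_pow[of n "\<lambda>_. a" I] assms(1) by simp
  then have "a ^ (k - n) * a ^ n \<in> ideal_pow I n" by (simp add: ideal_mult_left is_ideal_ideal_pow)
  with assms(2) show ?thesis by (simp flip: power_add)
qed

lemma exists_socle_element:
  fixes x :: "'a::comm_ring_1" and n :: nat
  assumes "x \<noteq> 0" and "\<And>f. (\<And>i. i < n \<Longrightarrow> f i \<in> S) \<Longrightarrow> (\<Prod>i<n. f i) * x = 0"
  shows "\<exists>z. z \<noteq> 0 \<and> (\<forall>a\<in>S. a * z = 0)"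
  using assms
proof (induction n arbitrary: x)
  case 0
  then show ?case by simp
next
  case (Suc n)
  show ?case
  proof (cases "\<forall>a\<in>S. a * x = 0")
    case True
    with Suc.prems(1) show ?thesis by blast
  next
    case False
    then obtain a where a: "a \<in> S" "a * x \<noteq> 0" by blast
    have "(\<Prod>i<n. f i) * (a * x) = 0" if f: "\<And>i. i < n \<Longrightarrow> f i \<in> S" for f
    proof -
      have "(\<Prod>i<Suc n. (f(n := a)) i) * x = 0"
        by (rule Suc.prems(2)) (use f a(1) in \<open>auto simp: less_Suc_eq\<close>)
      moreover have "(\<Prod>i<n. (f(n := a)) i) = (\<Prod>i<n. f i)" by (intro prod.cong) auto
      ultimately show ?thesis by (simp add: mult.assoc)
    qed
    then show ?thesis using Suc.IH a(2) by blast
  qed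
qed

lemma exists_socle_element_of_annihilator:
  assumes "x \<in> annihilator (ideal_pow S n)" and "x \<notin> ideal_pow S n"
  shows "\<exists>z. z \<noteq> 0 \<and> (\<forall>a\<in>S. a * z = 0)"
proof (rule exists_socle_element)
  show "x \<noteq> 0" using assms(2) ideal_zero[OF is_ideal_ideal_pow] by blast
  show "(\<Prod>i<n. f i) * x = 0" if "\<And>i. i < n \<Longrightarrow> f i \<in> S" for f
    using assms(1) prod_in_ideal_pow[OF that] by (simp add: annihilator_def)
qed

section \<open>Column vectors and pivot elimination\<close>

definition lincomb :: "(nat \<Rightarrow> 'a::comm_ring_1) \<Rightarrow> (nat \<Rightarrow> 'a) list \<Rightarrow> nat \<Rightarrow> 'a" where
  "lincomb c ys = (\<lambda>k. \<Sum>i<length ys. c i * (ys ! i) k)"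

definition supported :: "nat set \<Rightarrow> (nat \<Rightarrow> 'a::zero) set" where
  "supported J = {v. \<forall>k. k \<notin> J \<longrightarrow> v k = 0}"

lemma vecs_eq_supported: "vecs n = supported {..<n}"
  by (auto simp: vecs_def supported_def)

lemma supported_mono: "I \<subseteq> J \<Longrightarrow> supported I \<subseteq> supported J"
  by (auto simp: supported_def)

lemma lincomb_Nil [simp]: "lincomb c [] = 0"
  by (simp add: lincomb_def fun_eq_iff)

lemma lincomb_Cons_apply:
  "lincomb c (y # ys) k = c 0 * y k + lincomb (\<lambda>i. c (Suc i)) ys k"
  unfolding lincomb_def by (simp add: sum.lessThan_Suc_shift del: sum.lessThan_Suc)

lemma lincomb_zero [simp]: "lincomb (\<lambda>i. 0) ys = 0"
  by (simp add: lincomb_def fun_eq_iff)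

lemma lincomb_add: "lincomb (\<lambda>i. c i + d i) ys = lincomb c ys + lincomb d ys"
  by (simp add: lincomb_def fun_eq_iff sum.distrib distrib_right)

lemma lincomb_diff: "lincomb (\<lambda>i. c i - d i) ys = lincomb c ys - lincomb d ys"
  by (simp add: lincomb_def fun_eq_iff sum_subtractf left_diff_distrib)

lemma lincomb_scale: "lincomb (\<lambda>i. a * c i) ys = (\<lambda>k. a * lincomb c ys k)"
  by (simp add: lincomb_def sum_distrib_left mult.assoc)

lemma lincomb_Cons_shift: "lincomb c ys = lincomb (\<lambda>i. if i = 0 then 0 else c (i - 1)) (y # ys)"
  by (simp add: fun_eq_iff lincomb_Cons_apply)

lemma lincomb_restrict: "lincomb c ys = lincomb (\<lambda>i. if i < length ys then c i else 0) ys"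
  unfolding lincomb_def by (intro ext sum.cong) auto

lemma restrict_in_vecs: "(\<lambda>i. if i < n then c i else 0) \<in> vecs n"
  by (simp add: vecs_def)

text \<open>\<open>u\<close> is meant to be the inverse of the pivot \<open>y p\<close>.\<close>

definition pivot_elim :: "nat \<Rightarrow> 'a::comm_ring_1 \<Rightarrow> (nat \<Rightarrow> 'a) \<Rightarrow> (nat \<Rightarrow> 'a) \<Rightarrow> nat \<Rightarrow> 'a" where
  "pivot_elim p u y w = (\<lambda>k. w k - w p * u * y k)"

lemma lincomb_map_pivot_elim:
  "lincomb c (map (pivot_elim p u y) ys) = pivot_elim p u y (lincomb c ys)"
  unfolding lincomb_def pivot_elim_def
  by (auto simp: fun_eq_iff algebra_simps sum_subtractf sum_distrib_right sum_distrib_left)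

lemma pivot_elim_at_pivot: "u * y p = 1 \<Longrightarrow> pivot_elim p u y w p = 0"
  by (simp add: pivot_elim_def mult.assoc)

lemma pivot_elim_eq_self: "w p = 0 \<Longrightarrow> pivot_elim p u y w = w"
  by (simp add: pivot_elim_def)

lemma pivot_elim_supported:
  "w \<in> supported J \<Longrightarrow> y \<in> supported J \<Longrightarrow> u * y p = 1 \<Longrightarrow> pivot_elim p u y w \<in> supported (J - {p})"
  using pivot_elim_at_pivot[of u y p w] by (auto simp: supported_def pivot_elim_def)

lemma pivot_elim_lincomb_Cons:
  assumes "u * y p = 1"
  shows "pivot_elim p u y (lincomb c (y # ys)) = lincomb (\<lambda>i. c (Suc i)) (map (pivot_elim p u y) ys)"
proof
  fix k
  have "u * (c 0 * (y k * y p)) = c 0 * y k * (u * y p)" by (simp add: ac_simps)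
  with assms show "pivot_elim p u y (lincomb c (y # ys)) k = lincomb (\<lambda>i. c (Suc i)) (map (pivot_elim p u y) ys) k"
    by (simp add: lincomb_Cons_apply lincomb_map_pivot_elim pivot_elim_def algebra_simps)
qed

lemma pivot_elim_lift:
  assumes "pivot_elim p u y v = lincomb c (map (pivot_elim p u y) ys) + g"
  shows "v = lincomb (\<lambda>i. if i = 0 then (v p - lincomb c ys p) * u else c (i - 1)) (y # ys) + g"
proof
  fix k
  have "v k - v p * u * y k = lincomb c ys k - lincomb c ys p * u * y k + g k"
    using fun_cong[OF assms, of k] by (simp add: lincomb_map_pivot_elim pivot_elim_def)
  then show "v k = (lincomb (\<lambda>i. if i = 0 then (v p - lincomb c ys p) * u else c (i - 1)) (y # ys) + g) k"
    by (simp add: lincomb_Cons_apply algebra_simps)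
qed

section \<open>Purity and coordinate complements\<close>

text \<open>\<open>supported J = span ys \<oplus> supported I\<close>.\<close>

definition coordinate_complement :: "nat set \<Rightarrow> (nat \<Rightarrow> 'a::comm_ring_1) list \<Rightarrow> nat set \<Rightarrow> bool" where
  "coordinate_complement I ys J \<longleftrightarrow> I \<subseteq> J \<and>
     (\<forall>v\<in>supported J. \<exists>c g. g \<in> supported I \<and> v = lincomb c ys + g) \<and>
     (\<forall>c. lincomb c ys \<in> supported I \<longrightarrow> lincomb c ys = 0)"

lemma coordinate_complement_Nil: "coordinate_complement J [] J"
  by (auto simp: coordinate_complement_def)

lemma coordinate_complement_Cons_redundant:
  assumes y: "y = lincomb e ys" and I: "coordinate_complement I ys J"
  shows "coordinate_complement I (y # ys) J"
  unfolding coordinate_complement_def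
proof (intro conjI ballI allI impI)
  show "I \<subseteq> J" using I by (simp add: coordinate_complement_def)
next
  fix v :: "nat \<Rightarrow> 'a" assume "v \<in> supported J"
  then show "\<exists>c g. g \<in> supported I \<and> v = lincomb c (y # ys) + g"
    using I lincomb_Cons_shift[of _ ys y] by (metis coordinate_complement_def)
next
  fix c assume "lincomb c (y # ys) \<in> supported I"
  moreover have "lincomb c (y # ys) = lincomb (\<lambda>i. c 0 * e i + c (Suc i)) ys"
    using y by (simp add: fun_eq_iff lincomb_Cons_apply lincomb_add lincomb_scale)
  ultimately show "lincomb c (y # ys) = 0" using I by (simp add: coordinate_complement_def)
qed

lemma coordinate_complement_Cons_pivot:
  assumes u: "u * y p = 1" and y: "y \<in> supported J"
    and I: "coordinate_complement I (map (pivot_elim p u y) ys) (J - {p})"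
  shows "coordinate_complement I (y # ys) J"
  unfolding coordinate_complement_def
proof (intro conjI ballI allI impI)
  show "I \<subseteq> J" using I by (auto simp: coordinate_complement_def)
next
  fix v :: "nat \<Rightarrow> 'a" assume "v \<in> supported J"
  then have "pivot_elim p u y v \<in> supported (J - {p})" using pivot_elim_supported y u by blast
  then obtain c g where "g \<in> supported I" "pivot_elim p u y v = lincomb c (map (pivot_elim p u y) ys) + g"
    using I by (auto simp: coordinate_complement_def)
  then show "\<exists>c g. g \<in> supported I \<and> v = lincomb c (y # ys) + g" using pivot_elim_lift by blast
next
  fix c assume c: "lincomb c (y # ys) \<in> supported I"
  have "p \<notin> I" using I by (auto simp: coordinate_complement_def)
  then have "lincomb c (y # ys) p = 0" using c by (auto simp: supported_def)
  then have "lincomb c (y # ys) = lincomb (\<lambda>i. c (Suc i)) (map (pivot_elim p u y) ys)"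
    using pivot_elim_lincomb_Cons[of u y p, OF u] pivot_elim_eq_self by metis
  then show "lincomb c (y # ys) = 0" using I c by (auto simp: coordinate_complement_def)
qed

text \<open>\<open>m_pure m ys\<close> says that the span \<open>N\<close> of the columns \<open>ys\<close> satisfies \<open>N \<inter> m F \<subseteq> m N\<close>.\<close>

definition m_pure :: "'a::comm_ring_1 set \<Rightarrow> (nat \<Rightarrow> 'a) list \<Rightarrow> bool" where
  "m_pure m ys \<longleftrightarrow>
     (\<forall>c. range (lincomb c ys) \<subseteq> m \<longrightarrow> (\<exists>c'. range c' \<subseteq> m \<and> lincomb c ys = lincomb c' ys))"

lemma m_pure_Cons_redundant:
  assumes m: "is_ideal m" and y: "y = lincomb e ys" and pure: "m_pure m (y # ys)"
  shows "m_pure m ys"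
  unfolding m_pure_def
proof (intro allI impI)
  fix c assume c: "range (lincomb c ys) \<subseteq> m"
  have shift: "lincomb c ys = lincomb (\<lambda>i. if i = 0 then 0 else c (i - 1)) (y # ys)"
    by (rule lincomb_Cons_shift)
  obtain d where d: "range d \<subseteq> m" "lincomb c ys = lincomb d (y # ys)"
    using pure c unfolding m_pure_def shift by blast
  have "lincomb c ys = lincomb (\<lambda>i. d 0 * e i + d (Suc i)) ys"
    using d(2) y by (simp add: fun_eq_iff lincomb_Cons_apply lincomb_add lincomb_scale)
  moreover have "range (\<lambda>i. d 0 * e i + d (Suc i)) \<subseteq> m"
    using d(1) m by (auto intro!: ideal_add ideal_mult_right)
  ultimately show "\<exists>c'. range c' \<subseteq> m \<and> lincomb c ys = lincomb c' ys" by blast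
qed

lemma m_pure_pivot_elim:
  assumes u: "u * y p = 1" and pure: "m_pure m (y # ys)"
  shows "m_pure m (map (pivot_elim p u y) ys)"
  unfolding m_pure_def
proof (intro allI impI)
  let ?\<pi> = "pivot_elim p u y"
  fix c assume c: "range (lincomb c (map ?\<pi> ys)) \<subseteq> m"
  have eq: "lincomb c (map ?\<pi> ys) =
      lincomb (\<lambda>i. if i = 0 then - (lincomb c ys p * u) else c (i - 1)) (y # ys)"
    by (simp add: fun_eq_iff lincomb_map_pivot_elim pivot_elim_def lincomb_Cons_apply)
  obtain d where d: "range d \<subseteq> m" "lincomb c (map ?\<pi> ys) = lincomb d (y # ys)"
    using pure c unfolding m_pure_def eq by blast
  have "lincomb c (map ?\<pi> ys) p = 0"
    using u by (simp add: lincomb_map_pivot_elim pivot_elim_at_pivot[of u y p])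
  then have "lincomb c (map ?\<pi> ys) = ?\<pi> (lincomb c (map ?\<pi> ys))" by (simp add: pivot_elim_eq_self)
  also have "\<dots> = lincomb (\<lambda>i. d (Suc i)) (map ?\<pi> ys)"
    by (simp add: d(2) pivot_elim_lincomb_Cons[of u y p, OF u])
  finally show "\<exists>c'. range c' \<subseteq> m \<and> lincomb c (map ?\<pi> ys) = lincomb c' (map ?\<pi> ys)"
    using d(1) by (auto intro!: exI[of _ "\<lambda>i. d (Suc i)"])
qed

context local_max_ideal
begin

lemma m_pure_Cons_in_m_redundant:
  assumes y: "range y \<subseteq> m" and pure: "m_pure m (y # ys)"
  shows "\<exists>e. y = lincomb e ys"
proof -
  have "lincomb (\<lambda>i. if i = 0 then 1 else 0) (y # ys) = y" by (simp add: fun_eq_iff lincomb_Cons_apply)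
  then obtain c where c: "range c \<subseteq> m" "y = lincomb c (y # ys)"
    using pure y unfolding m_pure_def by metis
  obtain u where u: "u * (1 - c 0) = 1" using one_minus_unit c(1) by blast
  have "y = lincomb (\<lambda>i. u * c (Suc i)) ys"
  proof
    fix k
    have "(1 - c 0) * y k = lincomb (\<lambda>i. c (Suc i)) ys k"
      using fun_cong[OF c(2), of k] by (simp add: lincomb_Cons_apply algebra_simps)
    then have "u * ((1 - c 0) * y k) = u * lincomb (\<lambda>i. c (Suc i)) ys k" by simp
    then show "y k = lincomb (\<lambda>i. u * c (Suc i)) ys k"
      using u by (simp add: lincomb_scale flip: mult.assoc)
  qed
  then show ?thesis by blast
qed

text \<open>Gaussian elimination: a column with a unit entry serves as a pivot, and a column with all
  entries in \<open>m\<close> is, by purity, a combination of the remaining ones.\<close>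

lemma m_pure_coordinate_complement:
  assumes "set ys \<subseteq> supported J" and "m_pure m ys"
  shows "\<exists>I. coordinate_complement I ys J"
  using assms
proof (induction "length ys" arbitrary: ys J)
  case 0
  then show ?case using coordinate_complement_Nil by auto
next
  case (Suc n)
  then obtain y ys' where ys: "ys = y # ys'" and n: "n = length ys'" by (cases ys) auto
  show ?case
  proof (cases "range y \<subseteq> m")
    case True
    then obtain e where e: "y = lincomb e ys'" using m_pure_Cons_in_m_redundant Suc.prems(2) ys by blast
    then have "m_pure m ys'" using m_pure_Cons_redundant is_ideal_m Suc.prems(2) ys by blast
    then obtain I where "coordinate_complement I ys' J" using Suc.hyps(1)[OF n] Suc.prems(1) ys by auto
    then show ?thesis using coordinate_complement_Cons_redundant[OF e] ys by blast
  next
    case False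
    then obtain p where "y p \<notin> m" by auto
    then obtain u where u: "u * y p = 1" using unit_outside_m by blast
    let ?ys = "map (pivot_elim p u y) ys'"
    have "set ?ys \<subseteq> supported (J - {p})" using Suc.prems(1) u ys by (auto intro!: pivot_elim_supported)
    moreover have "m_pure m ?ys" using m_pure_pivot_elim[of u y p, OF u] Suc.prems(2) ys by blast
    ultimately obtain I where "coordinate_complement I ?ys (J - {p})"
      using Suc.hyps(1)[of ?ys "J - {p}"] n by auto
    then show ?thesis using coordinate_complement_Cons_pivot[of u y p, OF u] Suc.prems(1) ys by auto
  qed
qed

end

section \<open>Elimination against the Frobenius twist\<close>

definition spans_modulo :: "'a::comm_ring_1 set \<Rightarrow> nat set \<Rightarrow> (nat \<Rightarrow> 'a) list \<Rightarrow> nat set \<Rightarrow> bool" where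
  "spans_modulo m I ys J \<longleftrightarrow> I \<subseteq> J \<and>
     (\<forall>v\<in>supported J. \<exists>c g h. g \<in> supported I \<and> range h \<subseteq> m \<and> v = lincomb c ys + g + h)"

lemma spans_modulo_Nil:
  assumes "0 \<in> m"
  shows "spans_modulo m J [] J"
  unfolding spans_modulo_def
proof (intro conjI ballI)
  fix v :: "nat \<Rightarrow> 'a" assume "v \<in> supported J"
  then show "\<exists>c g h. g \<in> supported J \<and> range h \<subseteq> m \<and> v = lincomb c [] + g + h"
    using assms by (intro exI[of _ 0] exI[of _ v]) auto
qed simp

lemma spans_modulo_Cons: "spans_modulo m I ys J \<Longrightarrow> spans_modulo m I (y # ys) J"
  unfolding spans_modulo_def by (metis lincomb_Cons_shift)

lemma spans_modulo_Cons_pivot: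
  assumes u: "u * y p = 1" and y: "y \<in> supported J"
    and I: "spans_modulo m I (map (pivot_elim p u y) ys) (J - {p})"
  shows "spans_modulo m I (y # ys) J"
  unfolding spans_modulo_def
proof (intro conjI ballI)
  show "I \<subseteq> J" using I by (auto simp: spans_modulo_def)
next
  fix v :: "nat \<Rightarrow> 'a" assume "v \<in> supported J"
  then have "pivot_elim p u y v \<in> supported (J - {p})" using pivot_elim_supported y u by blast
  then obtain c g h where gh: "g \<in> supported I" "range h \<subseteq> m"
    "pivot_elim p u y v = lincomb c (map (pivot_elim p u y) ys) + (g + h)"
    using I by (auto simp: spans_modulo_def add.assoc)
  then show "\<exists>c g h. g \<in> supported I \<and> range h \<subseteq> m \<and> v = lincomb c (y # ys) + g + h"
    using pivot_elim_lift[OF gh(3)] by (metis add.assoc)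
qed

text \<open>Abstracts the Frobenius situation: \<open>fr = \<phi>\<^sup>r\<close>, \<open>P = m\<^sup>p \<supseteq> \<phi>\<^sup>r(m)\<close> and \<open>x \<in> (0 : m\<^sup>p) - m\<^sup>p\<close>.\<close>

locale frobenius_witness = local_max_ideal m for m :: "'a::comm_ring_1 set" +
  fixes fr :: "'a \<Rightarrow> 'a" and P :: "'a set" and x :: 'a
  assumes fr_add: "fr (a + b) = fr a + fr b"
    and fr_mult: "fr (a * b) = fr a * fr b"
    and fr_one: "fr 1 = 1"
    and fr_m: "a \<in> m \<Longrightarrow> fr a \<in> P"
    and is_ideal_P: "is_ideal P"
    and P_annihilates_x: "a \<in> P \<Longrightarrow> a * x = 0"
    and x_notin_P: "x \<notin> P"
begin

lemma fr_zero [simp]: "fr 0 = 0"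
  using fr_add[of 0 0] by simp

lemma fr_diff: "fr (a - b) = fr a - fr b"
  by (metis add_diff_cancel diff_add_cancel fr_add)

lemma fr_sum: "fr (sum f A) = (\<Sum>i\<in>A. fr (f i))"
  by (induction A rule: infinite_finite_induct) (auto simp: fr_add)

lemma comp_lincomb: "fr \<circ> lincomb c ys = lincomb (fr \<circ> c) (map ((\<circ>) fr) ys)"
  by (simp add: fun_eq_iff lincomb_def fr_sum fr_mult)

lemma map_comp_pivot_elim:
  "map ((\<circ>) fr) (map (pivot_elim p u y) ys) = map (pivot_elim p (fr u) (fr \<circ> y)) (map ((\<circ>) fr) ys)"
  by (simp add: fun_eq_iff pivot_elim_def fr_diff fr_mult)

lemma fr_unit: "u * a = 1 \<Longrightarrow> fr u * fr a = 1"
  by (metis fr_mult fr_one)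

lemma x_mult_fr_m: "a \<in> m \<Longrightarrow> x * fr a = 0"
  by (metis P_annihilates_x fr_m mult.commute)

definition twisted_reflects_m :: "nat set \<Rightarrow> (nat \<Rightarrow> 'a) list \<Rightarrow> bool" where
  "twisted_reflects_m I ys \<longleftrightarrow> (\<forall>c g h. g \<in> supported I \<longrightarrow> range h \<subseteq> P \<longrightarrow>
     (\<lambda>k. x * fr (g k) + h k) = lincomb c (map ((\<circ>) fr) ys) \<longrightarrow> range g \<subseteq> m)"

lemma twisted_reflects_m_Nil: "twisted_reflects_m I []"
  unfolding twisted_reflects_m_def
proof (intro allI impI)
  fix c g h
  assume h: "range h \<subseteq> P" and eq: "(\<lambda>k. x * fr (g k) + h k) = lincomb c (map ((\<circ>) fr) [])"
  show "range g \<subseteq> m"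
  proof (rule ccontr)
    assume "\<not> range g \<subseteq> m"
    then obtain k u where "u * g k = 1" using unit_outside_m by blast
    then have u: "fr (g k) * fr u = 1" using fr_unit by (simp add: mult.commute)
    have "x * fr (g k) = - h k" using fun_cong[OF eq, of k] by (simp add: eq_neg_iff_add_eq_0)
    then have "x = - h k * fr u" using u by (metis mult.assoc mult.right_neutral)
    moreover have "- h k * fr u \<in> P" using h is_ideal_P by (auto intro: ideal_mult_right ideal_uminus)
    ultimately show False using x_notin_P by simp
  qed
qed

lemma twisted_reflects_m_Cons_in_m:
  assumes y: "range y \<subseteq> m" and I: "twisted_reflects_m I ys"
  shows "twisted_reflects_m I (y # ys)"
  unfolding twisted_reflects_m_def
proof (intro allI impI)
  fix c g h assume g: "g \<in> supported I" and h: "range h \<subseteq> P"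
    and eq: "(\<lambda>k. x * fr (g k) + h k) = lincomb c (map ((\<circ>) fr) (y # ys))"
  define h' where "h' = (\<lambda>k. h k - c 0 * fr (y k))"
  have "(\<lambda>k. x * fr (g k) + h' k) = lincomb (\<lambda>i. c (Suc i)) (map ((\<circ>) fr) ys)"
  proof
    fix k
    have "x * fr (g k) + h k = c 0 * fr (y k) + lincomb (\<lambda>i. c (Suc i)) (map ((\<circ>) fr) ys) k"
      using fun_cong[OF eq, of k] by (simp add: lincomb_Cons_apply)
    then show "x * fr (g k) + h' k = lincomb (\<lambda>i. c (Suc i)) (map ((\<circ>) fr) ys) k"
      by (simp add: h'_def algebra_simps)
  qed
  moreover have "range h' \<subseteq> P"
    using h y fr_m is_ideal_P by (auto simp: h'_def intro!: ideal_diff ideal_mult_left)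
  ultimately show "range g \<subseteq> m" using I g by (auto simp: twisted_reflects_m_def)
qed

lemma twisted_reflects_m_Cons_pivot:
  assumes u: "u * y p = 1" and p: "p \<notin> I"
    and I: "twisted_reflects_m I (map (pivot_elim p u y) ys)"
  shows "twisted_reflects_m I (y # ys)"
  unfolding twisted_reflects_m_def
proof (intro allI impI)
  let ?\<pi> = "pivot_elim p (fr u) (fr \<circ> y)"
  fix c g h assume g: "g \<in> supported I" and h: "range h \<subseteq> P"
    and eq: "(\<lambda>k. x * fr (g k) + h k) = lincomb c (map ((\<circ>) fr) (y # ys))"
  have u': "fr u * (fr \<circ> y) p = 1" using fr_unit[OF u] by simp
  have "g p = 0" using g p by (simp add: supported_def)
  then have "?\<pi> (\<lambda>k. x * fr (g k) + h k) = (\<lambda>k. x * fr (g k) + (h k - h p * fr u * fr (y k)))"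
    by (simp add: fun_eq_iff pivot_elim_def algebra_simps)
  moreover have "?\<pi> (lincomb c (map ((\<circ>) fr) (y # ys))) =
      lincomb (\<lambda>i. c (Suc i)) (map ((\<circ>) fr) (map (pivot_elim p u y) ys))"
    unfolding map_comp_pivot_elim list.map(2)
    by (rule pivot_elim_lincomb_Cons[of "fr u" "fr \<circ> y" p, OF u'])
  moreover have "range (\<lambda>k. h k - h p * fr u * fr (y k)) \<subseteq> P"
    using h is_ideal_P by (auto intro!: ideal_diff ideal_mult_right)
  ultimately show "range g \<subseteq> m" using I g eq by (auto simp: twisted_reflects_m_def)
qed

text \<open>The same elimination without purity: columns with all entries in \<open>m\<close> are kept, at the
  price of an error term in \<open>m F\<close>.\<close>

lemma exists_twisted_complement:
  assumes "set ys \<subseteq> supported J"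
  shows "\<exists>I. spans_modulo m I ys J \<and> twisted_reflects_m I ys"
  using assms
proof (induction "length ys" arbitrary: ys J)
  case 0
  then show ?case
    using spans_modulo_Nil[OF ideal_zero[OF is_ideal_m]] twisted_reflects_m_Nil by auto
next
  case (Suc n)
  then obtain y ys' where ys: "ys = y # ys'" and n: "n = length ys'" by (cases ys) auto
  show ?case
  proof (cases "range y \<subseteq> m")
    case True
    obtain I where "spans_modulo m I ys' J" "twisted_reflects_m I ys'"
      using Suc.hyps(1)[OF n] Suc.prems ys by auto
    then show ?thesis using spans_modulo_Cons twisted_reflects_m_Cons_in_m[OF True] ys by blast
  next
    case False
    then obtain p where "y p \<notin> m" by auto
    then obtain u where u: "u * y p = 1" using unit_outside_m by blast
    let ?ys = "map (pivot_elim p u y) ys'"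
    have "set ?ys \<subseteq> supported (J - {p})" using Suc.prems u ys by (auto intro!: pivot_elim_supported)
    then obtain I where I: "spans_modulo m I ?ys (J - {p})" "twisted_reflects_m I ?ys"
      using Suc.hyps(1)[of ?ys "J - {p}"] n by auto
    have "p \<notin> I" using I(1) by (auto simp: spans_modulo_def)
    have "spans_modulo m I (y # ys') J"
      using spans_modulo_Cons_pivot[of u y p, OF u _ I(1)] Suc.prems ys by auto
    moreover have "twisted_reflects_m I (y # ys')"
      using twisted_reflects_m_Cons_pivot[of u y p, OF u \<open>p \<notin> I\<close> I(2)] .
    ultimately show ?thesis using ys by blast
  qed
qed

end

section \<open>Purity along exact sequences\<close>

definition exact_at :: "(nat \<Rightarrow> 'a::comm_ring_1) list \<Rightarrow> (nat \<Rightarrow> 'a) list \<Rightarrow> bool" where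
  "exact_at X Y \<longleftrightarrow> {v \<in> vecs (length X). lincomb v X = 0} = (\<lambda>c. lincomb c Y) ` vecs (length Y)"

definition cycles_are_boundaries :: "(nat \<Rightarrow> 'a::comm_ring_1) list \<Rightarrow> (nat \<Rightarrow> 'a) list \<Rightarrow> bool" where
  "cycles_are_boundaries X Y \<longleftrightarrow>
     {v \<in> vecs (length X). lincomb v X = 0} \<subseteq> (\<lambda>c. lincomb c Y) ` vecs (length Y)"

lemma lincomb_in_image_vecs: "lincomb c ys \<in> (\<lambda>c. lincomb c ys) ` vecs (length ys)"
  using lincomb_restrict restrict_in_vecs by blast

lemma exact_at_lincomb_lincomb: "exact_at X Y \<Longrightarrow> lincomb (lincomb c Y) X = 0"
  using lincomb_in_image_vecs[of c Y] by (auto simp: exact_at_def)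

lemma exact_at_kernel: "exact_at X Y \<Longrightarrow> v \<in> vecs (length X) \<Longrightarrow> lincomb v X = 0 \<Longrightarrow> \<exists>c. v = lincomb c Y"
  by (auto simp: exact_at_def)

context local_max_ideal
begin

text \<open>Multiplying by the socle element \<open>z\<close> turns \<open>X g \<in> m F\<close> into the genuine relation \<open>X (z g) = 0\<close>.\<close>

lemma complement_coeffs_in_m_by_socle:
  assumes compl: "coordinate_complement I Y {..<length X}" and exact: "exact_at X Y"
    and z: "z \<noteq> 0" "\<forall>a\<in>m. a * z = 0"
    and g: "g \<in> supported I" "range (lincomb g X) \<subseteq> m"
  shows "range g \<subseteq> m"
proof (rule ccontr)
  assume "\<not> range g \<subseteq> m"
  then obtain p u where u: "u * g p = 1" using unit_outside_m by blast
  define zg where "zg = (\<lambda>k. z * g k)"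
  have supp: "zg \<in> supported I" using g(1) by (simp add: zg_def supported_def)
  then have "zg \<in> vecs (length X)"
    using compl by (auto simp: coordinate_complement_def vecs_eq_supported supported_def)
  moreover have "lincomb zg X = 0"
  proof -
    have "lincomb g X k * z = 0" for k using g(2) z(2) by (simp add: image_subset_iff)
    then show ?thesis by (simp add: zg_def lincomb_scale fun_eq_iff mult.commute)
  qed
  ultimately obtain c where "zg = lincomb c Y" using exact_at_kernel[OF exact] by blast
  then have "zg = 0" using compl supp by (simp add: coordinate_complement_def)
  then have "u * (z * g p) = 0" by (simp add: zg_def fun_eq_iff)
  then show False using u z(1) by (metis mult.left_commute mult_1_right)
qed

lemma m_pure_of_exact:
  assumes Y: "set Y \<subseteq> supported {..<length X}" and exact: "exact_at X Y"
    and z: "z \<noteq> 0" "\<forall>a\<in>m. a * z = 0" and pure: "m_pure m Y"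
  shows "m_pure m X"
  unfolding m_pure_def
proof (intro allI impI)
  fix c assume c: "range (lincomb c X) \<subseteq> m"
  obtain I where compl: "coordinate_complement I Y {..<length X}"
    using m_pure_coordinate_complement[OF Y pure] by blast
  have "(\<lambda>i. if i < length X then c i else 0) \<in> supported {..<length X}"
    by (simp add: supported_def)
  then obtain e g where g: "g \<in> supported I"
    "(\<lambda>i. if i < length X then c i else 0) = lincomb e Y + g"
    using compl by (auto simp: coordinate_complement_def)
  have "lincomb c X = lincomb g X"
    using lincomb_restrict[of c X] exact_at_lincomb_lincomb[OF exact, of e]
    by (simp add: g(2) plus_fun_def lincomb_add)
  then show "\<exists>c'. range c' \<subseteq> m \<and> lincomb c X = lincomb c' X"
    using complement_coeffs_in_m_by_socle[OF compl exact z g(1)] c by auto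
qed

end

context frobenius_witness
begin

lemma twisted_boundary_of_m_cycle:
  assumes twisted: "cycles_are_boundaries (map ((\<circ>) fr) X) (map ((\<circ>) fr) Y)"
    and v: "v \<in> vecs (length X)" "range (lincomb v X) \<subseteq> m"
    and h: "range h \<subseteq> m" and decomp: "v = lincomb e Y + g + h"
  shows "\<exists>c. (\<lambda>k. x * fr (g k)) = lincomb c (map ((\<circ>) fr) Y)"
proof -
  txt \<open>\<open>x \<phi>(v)\<close> is a cycle of the twisted complex, since \<open>\<phi>(m) \<subseteq> P\<close> annihilates \<open>x\<close>.\<close>
  define w where "w = (\<lambda>i. x * fr (v i))"
  have "w \<in> vecs (length X)" using v(1) by (simp add: w_def vecs_def)
  moreover have "lincomb w (map ((\<circ>) fr) X) = (\<lambda>k. x * fr (lincomb v X k))"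
    using fun_cong[OF comp_lincomb[of v X]] by (simp add: w_def lincomb_scale comp_def fun_eq_iff)
  then have "lincomb w (map ((\<circ>) fr) X) = 0"
    using v(2) x_mult_fr_m by (auto simp: fun_eq_iff)
  ultimately obtain e' where e': "w = lincomb e' (map ((\<circ>) fr) Y)"
    using twisted by (auto simp: cycles_are_boundaries_def)
  have "(\<lambda>k. x * fr (g k)) = lincomb (\<lambda>i. e' i - x * fr (e i)) (map ((\<circ>) fr) Y)"
  proof
    fix k
    have "x * fr (lincomb e Y k) = lincomb (\<lambda>i. x * fr (e i)) (map ((\<circ>) fr) Y) k"
      using fun_cong[OF comp_lincomb[of e Y], of k] by (simp add: lincomb_scale comp_def)
    moreover have "w k = x * fr (lincomb e Y k) + x * fr (g k) + x * fr (h k)"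
      by (simp add: w_def decomp fr_add distrib_left)
    moreover have "x * fr (h k) = 0" using h x_mult_fr_m by auto
    ultimately show "x * fr (g k) = lincomb (\<lambda>i. e' i - x * fr (e i)) (map ((\<circ>) fr) Y) k"
      using fun_cong[OF e', of k] by (simp add: lincomb_diff)
  qed
  then show ?thesis by blast
qed

lemma m_pure_of_twisted_acyclic:
  assumes Y: "set Y \<subseteq> supported {..<length X}" and exact: "exact_at X Y"
    and twisted: "cycles_are_boundaries (map ((\<circ>) fr) X) (map ((\<circ>) fr) Y)"
  shows "m_pure m X"
  unfolding m_pure_def
proof (intro allI impI)
  fix c assume c: "range (lincomb c X) \<subseteq> m"
  obtain I where I: "spans_modulo m I Y {..<length X}" "twisted_reflects_m I Y"
    using exists_twisted_complement[OF Y] by blast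
  define v where "v = (\<lambda>i. if i < length X then c i else 0)"
  have v: "v \<in> vecs (length X)" "lincomb c X = lincomb v X"
    unfolding v_def by (simp_all add: restrict_in_vecs flip: lincomb_restrict)
  then obtain e g h where g: "g \<in> supported I" "range h \<subseteq> m" "v = lincomb e Y + g + h"
    using I(1) by (auto simp: spans_modulo_def vecs_eq_supported)
  then obtain e' where "(\<lambda>k. x * fr (g k)) = lincomb e' (map ((\<circ>) fr) Y)"
    using twisted_boundary_of_m_cycle[OF twisted v(1)] c v(2) by metis
  then have "range g \<subseteq> m"
    using I(2)[unfolded twisted_reflects_m_def, rule_format, of g "\<lambda>_. 0" e'] g(1) ideal_zero[OF is_ideal_P]
    by auto
  moreover have "lincomb c X = lincomb (\<lambda>k. g k + h k) X"
    using v(2) exact_at_lincomb_lincomb[OF exact, of e]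
    by (simp add: g(3) plus_fun_def lincomb_add add.assoc)
  ultimately show "\<exists>c'. range c' \<subseteq> m \<and> lincomb c X = lincomb c' X"
    using g(2) is_ideal_m by (auto intro!: exI[of _ "\<lambda>k. g k + h k"] ideal_add)
qed

end

section \<open>Free modules from pure presentations\<close>

definition unit_vec :: "nat \<Rightarrow> nat \<Rightarrow> 'a::zero_neq_one" where
  "unit_vec i = (\<lambda>k. if k = i then 1 else 0)"

locale finite_presentation = module scale
  for scale :: "'a::comm_ring_1 \<Rightarrow> 'm::ab_group_add \<Rightarrow> 'm" +
  fixes n :: nat and Y :: "(nat \<Rightarrow> 'a) list" and eps :: "(nat \<Rightarrow> 'a) \<Rightarrow> 'm"
  assumes eps_add: "v \<in> vecs n \<Longrightarrow> w \<in> vecs n \<Longrightarrow> eps (v + w) = eps v + eps w"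
    and eps_scale: "v \<in> vecs n \<Longrightarrow> eps (\<lambda>k. c * v k) = scale c (eps v)"
    and eps_surj: "eps ` vecs n = UNIV"
    and eps_kernel: "{v \<in> vecs n. eps v = 0} = (\<lambda>c. lincomb c Y) ` vecs (length Y)"
begin

lemma eps_lincomb: "lincomb c Y \<in> vecs n \<and> eps (lincomb c Y) = 0"
  using lincomb_in_image_vecs[of c Y] eps_kernel by blast

lemma eps_restrict_sum:
  assumes "finite T" and "T \<subseteq> {..<n}"
  shows "eps (\<lambda>k. if k \<in> T then c k else 0) = (\<Sum>i\<in>T. scale (c i) (eps (unit_vec i)))"
  using assms
proof (induction T rule: finite_induct)
  case empty
  have "(0 :: nat \<Rightarrow> 'a) \<in> vecs n" by (simp add: vecs_def)
  then have "eps 0 = eps 0 + eps 0" using eps_add by fastforce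
  then show ?case by (simp add: zero_fun_def)
next
  case (insert a T)
  have a: "unit_vec a \<in> vecs n" using insert.prems by (simp add: vecs_def unit_vec_def)
  have T: "(\<lambda>k. if k \<in> T then c k else 0) \<in> vecs n" using insert.prems by (auto simp: vecs_def)
  have "(\<lambda>k. if k \<in> insert a T then c k else 0) = (\<lambda>k. c a * unit_vec a k) + (\<lambda>k. if k \<in> T then c k else 0)"
    using insert.hyps(2) by (auto simp: fun_eq_iff unit_vec_def)
  moreover have "(\<lambda>k. c a * unit_vec a k) \<in> vecs n" using insert.prems by (auto simp: vecs_def unit_vec_def)
  ultimately show ?case
    using insert eps_add[OF _ T] eps_scale[OF a] by simp
qed

lemma eps_eq_zero_on_complement:
  assumes compl: "coordinate_complement I Y {..<n}" and g: "g \<in> supported I" "eps g = 0"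
  shows "g = 0"
proof -
  have "g \<in> vecs n"
    using compl g(1) supported_mono unfolding coordinate_complement_def vecs_eq_supported by blast
  then have "g \<in> {v \<in> vecs n. eps v = 0}" using g(2) by simp
  then obtain c where "g = lincomb c Y" unfolding eps_kernel by blast
  then show ?thesis using compl g(1) by (simp add: coordinate_complement_def)
qed

lemma span_eps_unit_vecs:
  assumes compl: "coordinate_complement I Y {..<n}"
  shows "span ((\<lambda>i. eps (unit_vec i)) ` I) = UNIV"
proof -
  have I: "I \<subseteq> {..<n}" "finite I" using compl by (auto simp: coordinate_complement_def finite_subset)
  have "w \<in> span ((\<lambda>i. eps (unit_vec i)) ` I)" for w
  proof -
    obtain v where v: "v \<in> vecs n" "w = eps v" using eps_surj by blast
    then obtain c g where g: "g \<in> supported I" "v = lincomb c Y + g"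
      using compl by (auto simp: coordinate_complement_def vecs_eq_supported)
    have "g \<in> vecs n" using g(1) I(1) by (auto simp: vecs_def supported_def)
    then have "w = eps g" using v g(2) eps_add eps_lincomb by simp
    also have "g = (\<lambda>k. if k \<in> I then g k else 0)" using g(1) by (auto simp: supported_def)
    finally have "w = (\<Sum>i\<in>I. scale (g i) (eps (unit_vec i)))" using eps_restrict_sum I by metis
    moreover have "(\<Sum>i\<in>I. scale (g i) (eps (unit_vec i))) \<in> span ((\<lambda>i. eps (unit_vec i)) ` I)"
      by (intro span_sum span_scale span_base imageI)
    ultimately show ?thesis by simp
  qed
  then show ?thesis by auto
qed

lemma independent_eps_unit_vecs:
  assumes compl: "coordinate_complement I Y {..<n}"
  shows "independent ((\<lambda>i. eps (unit_vec i)) ` I)"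
  unfolding independent_explicit_module
proof (intro allI impI)
  let ?f = "\<lambda>i. eps (unit_vec i)"
  fix t u b assume t: "finite t" "t \<subseteq> ?f ` I" and sum: "(\<Sum>v\<in>t. scale (u v) v) = 0" and b: "b \<in> t"
  define T where "T = inv_into I ?f ` t"
  have T: "T \<subseteq> I" "finite T" using t by (auto simp: T_def inv_into_into)
  have inv: "?f (inv_into I ?f b') = b'" if "b' \<in> t" for b' using f_inv_into_f[of b' ?f I] t(2) that by auto
  then have fT: "?f ` T = t" unfolding T_def image_image by (simp cong: image_cong)
  have "inj_on ?f T" unfolding inj_on_def T_def using inv by auto
  then have "(\<Sum>i\<in>T. scale (u (?f i)) (?f i)) = (\<Sum>v\<in>t. scale (u v) v)"
    unfolding fT[symmetric] by (simp add: sum.reindex)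
  then have "(\<Sum>i\<in>T. scale (u (?f i)) (?f i)) = 0" using sum by simp
  then have "eps (\<lambda>k. if k \<in> T then u (?f k) else 0) = 0"
    using eps_restrict_sum[OF T(2)] T(1) compl by (auto simp: coordinate_complement_def)
  moreover have "(\<lambda>k. if k \<in> T then u (?f k) else 0) \<in> supported I"
    using T(1) by (auto simp: supported_def)
  ultimately have zero: "(\<lambda>k. if k \<in> T then u (?f k) else 0) = 0"
    using eps_eq_zero_on_complement[OF compl] by blast
  obtain i where "i \<in> T" "b = ?f i" using b fT by blast
  then show "u b = 0" using fun_cong[OF zero, of i] by simp
qed

lemma free_module_of_coordinate_complement:
  "coordinate_complement I Y {..<n} \<Longrightarrow> free_module scale"
  unfolding free_module_def using span_eps_unit_vecs independent_eps_unit_vecs by blast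

end

section \<open>Free resolutions\<close>

definition mat_cols :: "nat \<Rightarrow> nat \<Rightarrow> (nat \<Rightarrow> nat \<Rightarrow> 'a::zero) \<Rightarrow> (nat \<Rightarrow> 'a) list" where
  "mat_cols rows cols A = map (\<lambda>l k. if k < rows then A k l else 0) [0..<cols]"

lemma length_mat_cols [simp]: "length (mat_cols rows cols A) = cols"
  by (simp add: mat_cols_def)

lemma mat_cols_supported: "set (mat_cols rows cols A) \<subseteq> supported {..<rows}"
  by (auto simp: mat_cols_def supported_def)

lemma mat_app_eq_lincomb: "mat_app rows cols A = (\<lambda>v. lincomb v (mat_cols rows cols A))"
  unfolding mat_app_def lincomb_def by (auto simp: fun_eq_iff mat_cols_def mult.commute intro!: sum.cong)

lemma map_comp_mat_cols:
  "f 0 = 0 \<Longrightarrow> map ((\<circ>) f) (mat_cols rows cols A) = mat_cols rows cols (\<lambda>k l. f (A k l))"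
  by (auto simp: mat_cols_def fun_eq_iff)

definition resolution_cols :: "(nat \<Rightarrow> nat) \<Rightarrow> (nat \<Rightarrow> nat \<Rightarrow> nat \<Rightarrow> 'a::zero) \<Rightarrow> nat \<Rightarrow> (nat \<Rightarrow> 'a) list" where
  "resolution_cols b d i = mat_cols (b i) (b (Suc i)) (d i)"

lemma length_resolution_cols [simp]: "length (resolution_cols b d i) = b (Suc i)"
  by (simp add: resolution_cols_def)

lemma resolution_cols_supported: "set (resolution_cols b d i) \<subseteq> supported {..<b i}"
  by (simp add: resolution_cols_def mat_cols_supported)

lemma free_resolution_exact_at:
  "free_resolution scale b d eps \<Longrightarrow> exact_at (resolution_cols b d i) (resolution_cols b d (Suc i))"
  unfolding free_resolution_def exact_at_def resolution_cols_def
  by (simp add: mat_app_eq_lincomb zero_fun_def)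

lemma finite_presentation_of_free_resolution:
  assumes "module scale" and "free_resolution scale b d eps"
  shows "finite_presentation scale (b 0) (resolution_cols b d 0) eps"
  using assms unfolding finite_presentation_def finite_presentation_axioms_def
  by (auto simp: free_resolution_def resolution_cols_def mat_app_eq_lincomb zero_fun_def plus_fun_def)

lemma tor_frob_vanishes_cycles_are_boundaries:
  fixes scale :: "'a::comm_ring_1 \<Rightarrow> 'm::ab_group_add \<Rightarrow> 'm"
  assumes "prime (CHAR('a))" and "tor_frob_vanishes scale (Suc i) r"
  obtains b d eps where "free_resolution scale b d eps"
    and "cycles_are_boundaries (map ((\<circ>) (\<lambda>a. a ^ CHAR('a) ^ r)) (resolution_cols b d i))
           (map ((\<circ>) (\<lambda>a. a ^ CHAR('a) ^ r)) (resolution_cols b d (Suc i)))"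
proof -
  have "(0::'a) ^ CHAR('a) ^ r = 0" using prime_gt_0_nat[OF assms(1)] by (simp add: power_0_left)
  with assms(2) that show thesis
    by (auto simp: tor_frob_vanishes_def cycles_are_boundaries_def resolution_cols_def
        map_comp_mat_cols frob_mat_def mat_app_eq_lincomb zero_fun_def)
qed

context local_max_ideal
begin

lemma m_pure_resolution_cols_0:
  assumes res: "free_resolution scale b d eps" and z: "z \<noteq> 0" "\<forall>a\<in>m. a * z = 0"
  shows "m_pure m (resolution_cols b d i) \<Longrightarrow> m_pure m (resolution_cols b d 0)"
proof (induction i)
  case (Suc i)
  have "set (resolution_cols b d (Suc i)) \<subseteq> supported {..<length (resolution_cols b d i)}"
    using resolution_cols_supported by simp
  then show ?case using Suc m_pure_of_exact[OF _ free_resolution_exact_at[OF res] z] by blast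
qed

lemma free_module_of_m_pure_resolution:
  assumes "module scale" and res: "free_resolution scale b d eps"
    and pure: "m_pure m (resolution_cols b d 0)"
  shows "free_module scale"
proof -
  interpret finite_presentation scale "b 0" "resolution_cols b d 0" eps
    using assms(1) res by (rule finite_presentation_of_free_resolution)
  obtain I where "coordinate_complement I (resolution_cols b d 0) {..<b 0}"
    using m_pure_coordinate_complement[OF resolution_cols_supported pure] by blast
  then show ?thesis by (rule free_module_of_coordinate_complement)
qed

lemma frobenius_witness_power:
  assumes p: "prime (CHAR('a))" and r: "r \<ge> 1"
    and x: "x \<in> annihilator (ideal_pow m (CHAR('a)))" "x \<notin> ideal_pow m (CHAR('a))"
  shows "frobenius_witness m (\<lambda>a. a ^ CHAR('a) ^ r) (ideal_pow m (CHAR('a))) x"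
proof (intro frobenius_witness.intro[OF local_max_ideal_axioms] frobenius_witness_axioms.intro)
  show "(a + b) ^ CHAR('a) ^ r = a ^ CHAR('a) ^ r + b ^ CHAR('a) ^ r" for a b :: 'a
    using freshmans_dream'[OF p refl] .
  show "a ^ CHAR('a) ^ r \<in> ideal_pow m (CHAR('a))" if "a \<in> m" for a
  proof (rule power_in_ideal_pow[OF that])
    show "CHAR('a) \<le> CHAR('a) ^ r"
      using r prime_gt_0_nat[OF p] by (simp add: self_le_power)
  qed
qed (use x in \<open>auto simp: is_ideal_ideal_pow annihilator_def power_mult_distrib\<close>)

end

theorem proposition1p1:
  fixes scale :: "'a::comm_ring_1 \<Rightarrow> 'm::ab_group_add \<Rightarrow> 'm"
    and j r :: nat
  assumes "prime (CHAR('a))"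
    and "noetherian_ring TYPE('a)"
    and "local_ring TYPE('a)"
    and "\<not> annihilator (ideal_pow (max_ideal TYPE('a)) (CHAR('a)))
             \<subseteq> ideal_pow (max_ideal TYPE('a)) (CHAR('a))"
    and "module scale"
    and "fin_gen_module scale"
    and "j \<ge> 1" and "r \<ge> 1"
    and "tor_frob_vanishes scale j r"
  shows "free_module scale"
proof -
  define m where "m = max_ideal TYPE('a)"
  interpret local_max_ideal m
    unfolding m_def using assms(3) by (rule local_ring_local_max_ideal)
  obtain x where x: "x \<in> annihilator (ideal_pow m (CHAR('a)))" "x \<notin> ideal_pow m (CHAR('a))"
    using assms(4) unfolding m_def by blast
  interpret frobenius_witness m "\<lambda>a. a ^ CHAR('a) ^ r" "ideal_pow m (CHAR('a))" x
    using frobenius_witness_power[OF assms(1,8) x] .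
  obtain z where z: "z \<noteq> 0" "\<forall>a\<in>m. a * z = 0"
    using exists_socle_element_of_annihilator[OF x] by blast
  obtain i where j: "j = Suc i" using assms(7) by (cases j) auto
  obtain b d eps where res: "free_resolution scale b d eps"
    and twisted: "cycles_are_boundaries (map ((\<circ>) (\<lambda>a. a ^ CHAR('a) ^ r)) (resolution_cols b d i))
           (map ((\<circ>) (\<lambda>a. a ^ CHAR('a) ^ r)) (resolution_cols b d (Suc i)))"
    using tor_frob_vanishes_cycles_are_boundaries assms(1,9) unfolding j by blast
  have "set (resolution_cols b d (Suc i)) \<subseteq> supported {..<length (resolution_cols b d i)}"
    using resolution_cols_supported by simp
  then have "m_pure m (resolution_cols b d i)"
    using m_pure_of_twisted_acyclic free_resolution_exact_at[OF res] twisted by blast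
  then have "m_pure m (resolution_cols b d 0)" using m_pure_resolution_cols_0[OF res z] by blast
  then show ?thesis using free_module_of_m_pure_resolution[OF assms(5) res] by blast
qed

end
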